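(* Let $q$ be even and let $X$ be any (trace-class) operator on the $2^{n/2}$-dimensional Hilbert space of $n$ Majorana modes. Then \[ \binom{n}{q}^{-1} \sum_{I \in \binom{[n]}{q}} \left|\mathrm{tr}(\psi_I X)\right|^2 \leq 2\, \Delta(\mathcal{S}_q^n)\,(\mathrm{tr}|X|)^2. \]
   Context: Majorana operators $\psi_1,\dots,\psi_n$ are Hermitian operators on a Hilbert space of dimension $d=2^{n/2}$ with $\{\psi_i,\psi_j\}=\delta_{ij}$; for $I=\{i_1<\dots<i_q\}$, $\psi_I=i^{q/2}\psi_{i_1}\cdots\psi_{i_q}$ (a Hermitian operator). $\mathrm{tr}(\cdot)=d^{-1}\mathrm{Tr}(\cdot)$ is the normalized trace and $|X|=\sqrt{X^\dagger X}$. The commutation index of $\mathcal{S}_q^n=\{\psi_I: I\in\binom{[n]}{q}\}$ is $\Delta(\mathcal{S}_q^n)=\sup_\rho\binom{n}{q}^{-1}\sum_{I\in\binom{[n]}{q}}(\mathrm{Tr}(\psi_I\rho))^2$, the supremum over density matrices $\rho$. *)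

theory Defs
  imports "Jordan_Normal_Form.Schur_Decomposition"
begin

(* Un-normalized trace Tr and normalized trace tr = d^{-1} Tr of a square complex matrix *)
definition mTr :: "complex mat \<Rightarrow> complex" where
  "mTr A = (\<Sum>i<dim_row A. A $$ (i, i))"

definition ntr :: "complex mat \<Rightarrow> complex" where
  "ntr A = mTr A / of_nat (dim_row A)"

definition hermitian :: "complex mat \<Rightarrow> bool" where
  "hermitian A \<longleftrightarrow> A \<in> carrier_mat (dim_row A) (dim_row A) \<and> mat_adjoint A = A"

definition psd :: "complex mat \<Rightarrow> bool" where
  "psd A \<longleftrightarrow> hermitian A \<and>
     (\<forall>v \<in> carrier_vec (dim_row A). 0 \<le> (A *\<^sub>v v) \<bullet>c v)"

definition density :: "nat \<Rightarrow> complex mat \<Rightarrow> bool" where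
  "density d \<rho> \<longleftrightarrow> \<rho> \<in> carrier_mat d d \<and> psd \<rho> \<and> mTr \<rho> = 1"

definition mat_abs :: "complex mat \<Rightarrow> complex mat" where
  "mat_abs X = (THE P. P \<in> carrier_mat (dim_col X) (dim_col X) \<and> psd P \<and>
                        P * P = mat_adjoint X * X)"

(* psi_1..psi_n (indexed 0..n-1) are Majorana operators on a d-dimensional space *)
definition majorana :: "nat \<Rightarrow> nat \<Rightarrow> (nat \<Rightarrow> complex mat) \<Rightarrow> bool" where
  "majorana n d \<psi> \<longleftrightarrow>
     (\<forall>i<n. \<psi> i \<in> carrier_mat d d \<and> hermitian (\<psi> i)) \<and>
     (\<forall>i<n. \<forall>j<n. \<psi> i * \<psi> j + \<psi> j * \<psi> i = (if i = j then 1 else 0) \<cdot>\<^sub>m 1\<^sub>m d)"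

(* psi_I = i^{q/2} psi_{i_1} ... psi_{i_q}, i_1 < ... < i_q, q = |I|; i^{q/2} = e^{i pi q/4} *)
definition psiI :: "nat \<Rightarrow> (nat \<Rightarrow> complex mat) \<Rightarrow> nat set \<Rightarrow> complex mat" where
  "psiI d \<psi> I = cis (pi * real (card I) / 4) \<cdot>\<^sub>m
      foldr (\<lambda>i M. \<psi> i * M) (sorted_list_of_set I) (1\<^sub>m d)"

definition subsets_q :: "nat \<Rightarrow> nat \<Rightarrow> nat set set" where
  "subsets_q n q = {I. I \<subseteq> {0..<n} \<and> card I = q}"

definition comm_index :: "nat \<Rightarrow> nat \<Rightarrow> nat \<Rightarrow> (nat \<Rightarrow> complex mat) \<Rightarrow> real" where
  "comm_index n q d \<psi> = Sup {(1 / real (n choose q)) *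
       (\<Sum>I\<in>subsets_q n q. Re ((mTr (psiI d \<psi> I * \<rho>))\<^sup>2)) | \<rho>. density d \<rho>}"

end

theory Submission
  imports Defs "Jordan_Normal_Form.Spectral_Radius" "HOL-Analysis.L2_Norm"
begin

(* Write C = binom n q and Delta for the commutation index. Testing the definition of Delta on
   pure states y gives sum_I <psi_I y, y>^2 <= C Delta |y|^4; polarization (the psi_I are
   self-adjoint for even q) extends this to sum_I |<psi_I u, v>|^2 <= C Delta (|u|^2 + |v|^2)^2 / 2,
   the factor 2 coming from treating real and imaginary parts separately.
   Let w_i be an orthonormal eigenbasis of X^dagger X and s_i = |X w_i|. Then
   |X| = sum_i s_i w_i w_i^dagger, so Tr|X| = sum_i s_i, while Tr(psi_I X) = sum_i <psi_I X w_i, w_i>.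
   Rescaling gives sum_I |<psi_I X w_i, w_i>|^2 <= 2 C Delta s_i^2 for each i, and Minkowski's
   inequality in l^2 over the index I adds up these bounds over i. *)

section \<open>Vectors as coordinate functions\<close>

(* A vector of C^d is a function nat => complex of which only the first d values matter;
   cinner is linear in its first and conjugate-linear in its second argument. *)

definition cinner :: "nat \<Rightarrow> (nat \<Rightarrow> complex) \<Rightarrow> (nat \<Rightarrow> complex) \<Rightarrow> complex" where
  "cinner d x y = (\<Sum>r<d. x r * cnj (y r))"

definition mat_act :: "nat \<Rightarrow> complex mat \<Rightarrow> (nat \<Rightarrow> complex) \<Rightarrow> nat \<Rightarrow> complex" where
  "mat_act d A x = (\<lambda>r. \<Sum>c<d. A $$ (r, c) * x c)"

lemma mat_act_mult:
  assumes "A \<in> carrier_mat d d" "B \<in> carrier_mat d d" "r < d"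
  shows "mat_act d (A * B) x r = mat_act d A (mat_act d B x) r"
proof -
  have "mat_act d (A * B) x r = (\<Sum>c<d. \<Sum>k<d. A $$ (r, k) * B $$ (k, c) * x c)"
    unfolding mat_act_def using assms by (simp add: scalar_prod_def atLeast0LessThan sum_distrib_right)
  also have "\<dots> = (\<Sum>k<d. \<Sum>c<d. A $$ (r, k) * B $$ (k, c) * x c)"
    by (rule sum.swap)
  also have "\<dots> = mat_act d A (mat_act d B x) r"
    unfolding mat_act_def by (simp add: sum_distrib_left mult.assoc)
  finally show ?thesis .
qed

lemma mat_act_cong: "(\<And>r. r < d \<Longrightarrow> x r = y r) \<Longrightarrow> mat_act d A x r = mat_act d A y r"
  unfolding mat_act_def by (rule sum.cong) auto

lemma mat_act_scale: "mat_act d A (\<lambda>r. a * x r) = (\<lambda>r. a * mat_act d A x r)"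
  unfolding mat_act_def sum_distrib_left by (simp only: ac_simps)

lemma mat_act_add: "mat_act d A (\<lambda>r. x r + y r) = (\<lambda>r. mat_act d A x r + mat_act d A y r)"
  unfolding mat_act_def distrib_left by (simp only: sum.distrib)

lemma mat_act_diff: "mat_act d A (\<lambda>r. x r - y r) = (\<lambda>r. mat_act d A x r - mat_act d A y r)"
  unfolding mat_act_def right_diff_distrib by (simp only: sum_subtractf)

lemma mat_act_sum: "mat_act d A (\<lambda>r. \<Sum>j\<in>J. f j r) = (\<lambda>r. \<Sum>j\<in>J. mat_act d A (f j) r)"
  unfolding mat_act_def sum_distrib_left by (subst sum.swap) (rule refl)

lemma mat_act_delta: "c < d \<Longrightarrow> mat_act d A (\<lambda>t. if t = c then 1 else 0) r = A $$ (r, c)"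
  unfolding mat_act_def by (simp add: if_distrib cong: if_cong)

lemma cinner_commute: "cnj (cinner d x y) = cinner d y x"
  by (simp add: cinner_def mult.commute)

lemma cinner_self: "cinner d x x = of_real (\<Sum>r<d. (cmod (x r))\<^sup>2)"
  unfolding cinner_def of_real_sum by (simp only: complex_norm_square)

lemma cinner_self_real: "cinner d x x = of_real (Re (cinner d x x))"
  by (simp add: cinner_self)

lemma cinner_self_nonneg: "0 \<le> Re (cinner d x x)"
  by (simp add: cinner_self sum_nonneg)

lemma cinner_self_eq_0: "cinner d x x = 0 \<Longrightarrow> r < d \<Longrightarrow> x r = 0"
  unfolding cinner_self of_real_eq_0_iff by (subst (asm) sum_nonneg_eq_0_iff) auto

lemma cinner_self_nonzero: "cinner d y x \<noteq> 0 \<Longrightarrow> cinner d y y \<noteq> 0"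
proof
  assume "cinner d y y = 0"
  then have "\<forall>r<d. y r = 0"
    using cinner_self_eq_0 by blast
  then have "cinner d y x = 0"
    by (simp add: cinner_def)
  moreover assume "cinner d y x \<noteq> 0"
  ultimately show False
    by simp
qed

lemma cinner_cong:
  "(\<And>r. r < d \<Longrightarrow> x r = x' r) \<Longrightarrow> (\<And>r. r < d \<Longrightarrow> y r = y' r) \<Longrightarrow> cinner d x y = cinner d x' y'"
  unfolding cinner_def by (rule sum.cong) auto

lemma cinner_scale_left: "cinner d (\<lambda>r. a * x r) y = a * cinner d x y"
  by (simp add: cinner_def sum_distrib_left mult.assoc)

lemma cinner_scale_right: "cinner d x (\<lambda>r. a * y r) = cnj a * cinner d x y"
  by (simp add: cinner_def sum_distrib_left mult.assoc mult.left_commute)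

lemma cinner_add_left: "cinner d (\<lambda>r. x r + y r) z = cinner d x z + cinner d y z"
  unfolding cinner_def distrib_right by (rule sum.distrib)

lemma cinner_add_right: "cinner d z (\<lambda>r. x r + y r) = cinner d z x + cinner d z y"
  unfolding cinner_def complex_cnj_add distrib_left by (rule sum.distrib)

lemma cinner_diff_left: "cinner d (\<lambda>r. x r - y r) z = cinner d x z - cinner d y z"
  unfolding cinner_def left_diff_distrib by (rule sum_subtractf)

lemma cinner_diff_right: "cinner d z (\<lambda>r. x r - y r) = cinner d z x - cinner d z y"
  unfolding cinner_def complex_cnj_diff right_diff_distrib by (rule sum_subtractf)

lemma cinner_sum_left: "cinner d (\<lambda>r. \<Sum>j\<in>J. f j r) y = (\<Sum>j\<in>J. cinner d (f j) y)"
  unfolding cinner_def sum_distrib_right by (rule sum.swap)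

lemma cinner_delta_right: "c < d \<Longrightarrow> cinner d x (\<lambda>t. if t = c then 1 else 0) = x c"
  unfolding cinner_def by (simp add: if_distrib cong: if_cong)

lemma cinner_delta_self: "c < d \<Longrightarrow> cinner d (\<lambda>t. if t = c then 1 else 0) (\<lambda>t. if t = c then 1 else 0) = 1"
  by (simp add: cinner_delta_right)

lemma cinner_delta_left: "c < d \<Longrightarrow> cinner d (\<lambda>t. if t = c then 1 else 0) y = cnj (y c)"
  using cinner_delta_right[of c d y] cinner_commute[of d y] by metis

lemma exists_unit_multiple:
  assumes "cinner d y y \<noteq> 0"
  obtains c where "cinner d (\<lambda>r. c * y r) (\<lambda>r. c * y r) = 1"
proof
  have "0 < Re (cinner d y y)"
    using assms cinner_self_nonneg[of d y] cinner_self_real[of d y]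
    by (metis less_eq_real_def of_real_0)
  then show "cinner d (\<lambda>r. of_real (1 / sqrt (Re (cinner d y y))) * y r)
                      (\<lambda>r. of_real (1 / sqrt (Re (cinner d y y))) * y r) = 1"
    unfolding cinner_scale_left cinner_scale_right
    by (subst (3) cinner_self_real) (simp add: field_simps flip: of_real_mult)
qed

lemma dim_mat_adjoint [simp]:
  "dim_row (mat_adjoint A) = dim_col A" "dim_col (mat_adjoint A) = dim_row A"
  unfolding mat_adjoint_def by auto

lemma mat_adjoint_carrier: "A \<in> carrier_mat m n \<Longrightarrow> mat_adjoint A \<in> carrier_mat n m"
  by auto

lemma index_mat_adjoint:
  "i < dim_col A \<Longrightarrow> j < dim_row A \<Longrightarrow> mat_adjoint A $$ (i, j) = cnj (A $$ (j, i))"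
  unfolding mat_adjoint_def by (simp add: mat_of_rows_index)

lemma mat_adjoint_adjoint: "mat_adjoint (mat_adjoint A) = (A :: complex mat)"
proof (rule eq_matI)
  fix i j assume "i < dim_row A" "j < dim_col A"
  then show "mat_adjoint (mat_adjoint A) $$ (i, j) = A $$ (i, j)"
    by (simp add: index_mat_adjoint)
qed auto

lemma mat_adjoint_mult:
  fixes A B :: "complex mat"
  assumes "A \<in> carrier_mat m k" "B \<in> carrier_mat k n"
  shows "mat_adjoint (A * B) = mat_adjoint B * mat_adjoint A"
proof (rule eq_matI)
  fix i j assume "i < dim_row (mat_adjoint B * mat_adjoint A)" "j < dim_col (mat_adjoint B * mat_adjoint A)"
  then have ij: "i < n" "j < m"
    using assms by auto
  have "mat_adjoint (A * B) $$ (i, j) = (\<Sum>t<k. cnj (A $$ (j, t)) * cnj (B $$ (t, i)))"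
    using ij assms by (simp add: index_mat_adjoint scalar_prod_def atLeast0LessThan cnj_sum)
  also have "\<dots> = (\<Sum>t<k. mat_adjoint B $$ (i, t) * mat_adjoint A $$ (t, j))"
    using ij assms by (intro sum.cong) (auto simp: index_mat_adjoint)
  also have "\<dots> = (mat_adjoint B * mat_adjoint A) $$ (i, j)"
    using ij assms by (simp add: scalar_prod_def atLeast0LessThan)
  finally show "mat_adjoint (A * B) $$ (i, j) = (mat_adjoint B * mat_adjoint A) $$ (i, j)" .
qed (use assms in auto)

lemma cinner_mat_act_adjoint:
  assumes "A \<in> carrier_mat d d"
  shows "cinner d (mat_act d A x) y = cinner d x (mat_act d (mat_adjoint A) y)"
proof -
  have "cinner d (mat_act d A x) y = (\<Sum>r<d. \<Sum>c<d. A $$ (r, c) * x c * cnj (y r))"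
    by (simp add: cinner_def mat_act_def sum_distrib_right)
  also have "\<dots> = (\<Sum>c<d. \<Sum>r<d. x c * cnj (mat_adjoint A $$ (c, r) * y r))"
    using assms by (subst sum.swap) (auto simp: index_mat_adjoint intro!: sum.cong)
  also have "\<dots> = cinner d x (mat_act d (mat_adjoint A) y)"
    unfolding cinner_def mat_act_def cnj_sum sum_distrib_left ..
  finally show ?thesis .
qed

lemma cinner_mat_act_selfadjoint:
  "A \<in> carrier_mat d d \<Longrightarrow> mat_adjoint A = A \<Longrightarrow>
   cinner d (mat_act d A x) y = cinner d x (mat_act d A y)"
  by (metis cinner_mat_act_adjoint)

lemma cinner_mat_act_selfadjoint_real:
  "A \<in> carrier_mat d d \<Longrightarrow> mat_adjoint A = A \<Longrightarrow>
   cinner d (mat_act d A y) y = of_real (Re (cinner d (mat_act d A y) y))"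
proof -
  assume "A \<in> carrier_mat d d" "mat_adjoint A = A"
  then have real: "cnj (cinner d (mat_act d A y) y) = cinner d (mat_act d A y) y"
    by (simp add: cinner_commute cinner_mat_act_selfadjoint)
  have "Im (cinner d (mat_act d A y) y) = 0"
    using arg_cong[OF real, of Im] by simp
  then show ?thesis
    by (simp add: complex_eq_iff)
qed

lemma cinner_mat_act_gram:
  assumes "X \<in> carrier_mat d d"
  shows "cinner d (mat_act d X x) (mat_act d X y) = cinner d x (mat_act d (mat_adjoint X * X) y)"
  using assms
  by (auto simp: cinner_mat_act_adjoint mat_act_mult[OF mat_adjoint_carrier] intro!: cinner_cong)

section \<open>Spectral theorem for self-adjoint matrices\<close>

definition orthonormal_family :: "nat \<Rightarrow> nat \<Rightarrow> (nat \<Rightarrow> nat \<Rightarrow> complex) \<Rightarrow> bool" where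
  "orthonormal_family d k w \<longleftrightarrow>
     (\<forall>i<k. \<forall>j<k. cinner d (w i) (w j) = (if i = j then 1 else 0))"

lemma orthonormal_family_resolution:
  assumes w: "orthonormal_family d d w" and "r < d" "c < d"
  shows "(\<Sum>i<d. w i r * cnj (w i c)) = (if r = c then 1 else 0)"
proof -
  define U where "U = mat d d (\<lambda>(r, i). w i r)"
  define V where "V = mat d d (\<lambda>(i, c). cnj (w i c))"
  have U: "U \<in> carrier_mat d d" and V: "V \<in> carrier_mat d d"
    unfolding U_def V_def by auto
  have "V * U = 1\<^sub>m d"
  proof (rule eq_matI)
    fix i j assume "i < dim_row (1\<^sub>m d :: complex mat)" "j < dim_col (1\<^sub>m d :: complex mat)"
    then have "(V * U) $$ (i, j) = cinner d (w j) (w i)"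
      by (simp add: U_def V_def cinner_def scalar_prod_def atLeast0LessThan mult.commute)
    also have "\<dots> = (1\<^sub>m d :: complex mat) $$ (i, j)"
      using w \<open>i < _\<close> \<open>j < _\<close> unfolding orthonormal_family_def by auto
    finally show "(V * U) $$ (i, j) = (1\<^sub>m d :: complex mat) $$ (i, j)" .
  qed (use U V in auto)
  then have "U * V = 1\<^sub>m d"
    using mat_mult_left_right_inverse[OF V U] by simp
  then have "(U * V) $$ (r, c) = (1\<^sub>m d :: complex mat) $$ (r, c)"
    by simp
  with assms(2,3) show ?thesis
    by (simp add: U_def V_def scalar_prod_def atLeast0LessThan)
qed

lemma orthonormal_family_expansion:
  assumes w: "orthonormal_family d d w" and r: "r < d"
  shows "x r = (\<Sum>i<d. cinner d x (w i) * w i r)"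
proof -
  have "(\<Sum>i<d. cinner d x (w i) * w i r) = (\<Sum>c<d. x c * (\<Sum>i<d. w i r * cnj (w i c)))"
    unfolding cinner_def sum_distrib_right sum_distrib_left
    by (subst sum.swap) (simp add: ac_simps)
  also have "\<dots> = x r"
    using r by (simp add: orthonormal_family_resolution[OF w r] if_distrib cong: if_cong)
  finally show ?thesis by simp
qed

lemma orthonormal_family_coeffs_eq:
  assumes "orthonormal_family d d w" "\<And>i. i < d \<Longrightarrow> cinner d x (w i) = cinner d y (w i)" "r < d"
  shows "x r = y r"
  using assms orthonormal_family_expansion[of d w r x] orthonormal_family_expansion[of d w r y]
  by simp

lemma mat_eq_by_orthonormal_basis:
  assumes w: "orthonormal_family d d w" and A: "A \<in> carrier_mat d d" and B: "B \<in> carrier_mat d d"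
    and act: "\<And>i r. i < d \<Longrightarrow> r < d \<Longrightarrow> mat_act d A (w i) r = mat_act d B (w i) r"
  shows "A = B"
proof (rule eq_matI)
  have entry: "C $$ (r, c) = (\<Sum>i<d. cnj (w i c) * mat_act d C (w i) r)" if "c < d" for C r c
  proof -
    have "C $$ (r, c) = mat_act d C (\<lambda>t. if t = c then 1 else 0) r"
      using that by (simp add: mat_act_delta)
    also have "\<dots> = mat_act d C (\<lambda>t. \<Sum>i<d. cinner d (\<lambda>t. if t = c then 1 else 0) (w i) * w i t) r"
      by (rule mat_act_cong) (use orthonormal_family_expansion[OF w] in auto)
    finally show ?thesis
      unfolding mat_act_sum mat_act_scale cinner_delta_left[OF that] .
  qed
  fix r c assume "r < dim_row B" "c < dim_col B"
  with B act show "A $$ (r, c) = B $$ (r, c)"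
    by (simp add: entry)
qed (use A B in auto)

lemma trace_orthonormal_basis:
  assumes w: "orthonormal_family d d w" and B: "B \<in> carrier_mat d d"
  shows "mTr B = (\<Sum>i<d. cinner d (mat_act d B (w i)) (w i))"
proof -
  have "(\<Sum>i<d. cinner d (mat_act d B (w i)) (w i))
      = (\<Sum>r<d. \<Sum>c<d. B $$ (r, c) * (\<Sum>i<d. w i c * cnj (w i r)))"
    unfolding cinner_def mat_act_def sum_distrib_right sum_distrib_left
    by (subst sum.swap, rule sum.cong[OF refl], subst sum.swap) (simp add: ac_simps)
  also have "\<dots> = (\<Sum>r<d. B $$ (r, r))"
    by (simp add: orthonormal_family_resolution[OF w] if_distrib cong: if_cong)
  finally show ?thesis
    unfolding mTr_def using B by simp
qed

lemma orthonormal_family_snoc: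
  assumes "orthonormal_family d k w" "cinner d u u = 1" "\<forall>i<k. cinner d u (w i) = 0"
  shows "orthonormal_family d (Suc k) (w(k := u))"
proof -
  have "cinner d (w i) u = 0" if "i < k" for i
    using assms(3) that cinner_commute[of d u "w i"] by auto
  with assms show ?thesis
    unfolding orthonormal_family_def by (auto simp: less_Suc_eq)
qed

lemma orthonormal_family_orthogonal_unit:
  assumes w: "orthonormal_family d k w" and k: "k < d"
  shows "\<exists>u. cinner d u u = 1 \<and> (\<forall>i<k. cinner d u (w i) = 0)"
proof -
  \<comment> \<open>Comparing traces, the projection onto the span of \<open>k < d\<close> orthonormal vectors is not the identity.\<close>
  have "\<not> (\<forall>r<d. \<forall>c<d. (\<Sum>i<k. w i r * cnj (w i c)) = (if r = c then 1 else 0))"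
  proof
    assume resolution: "\<forall>r<d. \<forall>c<d. (\<Sum>i<k. w i r * cnj (w i c)) = (if r = c then 1 else 0)"
    have "(of_nat d :: complex) = (\<Sum>r<d. \<Sum>i<k. w i r * cnj (w i r))"
      using resolution by simp
    also have "\<dots> = (\<Sum>i<k. cinner d (w i) (w i))"
      unfolding cinner_def by (rule sum.swap)
    also have "\<dots> = of_nat k"
      using w unfolding orthonormal_family_def by simp
    finally show False
      using k by simp
  qed
  then obtain r c where r: "r < d" and c: "c < d"
    and ne: "(\<Sum>i<k. w i r * cnj (w i c)) \<noteq> (if r = c then 1 else 0)"
    by blast
  define u where "u = (\<lambda>t. (if t = c then 1 else 0) - (\<Sum>i<k. cnj (w i c) * w i t))"
  have "u r \<noteq> 0"
    using ne unfolding u_def by (simp add: mult.commute)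
  then have nonzero: "cinner d u u \<noteq> 0"
    using cinner_self_eq_0 r by blast
  have orth: "cinner d u (w m) = 0" if m: "m < k" for m
  proof -
    have "(\<Sum>i<k. cnj (w i c) * cinner d (w i) (w m)) = (\<Sum>i<k. if i = m then cnj (w m c) else 0)"
      using w m unfolding orthonormal_family_def by (intro sum.cong) auto
    then show ?thesis
      using m unfolding u_def cinner_diff_left cinner_sum_left cinner_scale_left cinner_delta_left[OF c]
      by simp
  qed
  obtain a where "cinner d (\<lambda>r. a * u r) (\<lambda>r. a * u r) = 1"
    using exists_unit_multiple[OF nonzero] .
  with orth show ?thesis
    by (intro exI[of _ "\<lambda>r. a * u r"]) (simp add: cinner_scale_left)
qed

lemma orthonormal_family_extend:
  "orthonormal_family d k w \<Longrightarrow> k \<le> d \<Longrightarrow> \<exists>b. orthonormal_family d d b \<and> (\<forall>i<k. b i = w i)"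
proof (induction "d - k" arbitrary: k w)
  case 0
  then show ?case by auto
next
  case (Suc m)
  obtain u where "cinner d u u = 1" "\<forall>i<k. cinner d u (w i) = 0"
    using orthonormal_family_orthogonal_unit[OF Suc.prems(1)] Suc.hyps(2) by (metis zero_less_Suc zero_less_diff)
  with Suc.prems(1) have "orthonormal_family d (Suc k) (w(k := u))"
    by (rule orthonormal_family_snoc)
  moreover have "m = d - Suc k" "Suc k \<le> d"
    using Suc.hyps(2) by auto
  ultimately obtain b where "orthonormal_family d d b" "\<forall>i<Suc k. b i = (w(k := u)) i"
    using Suc.hyps(1) by blast
  then show ?case by auto
qed

lemma complex_mat_eigenvector_exists:
  assumes "(M :: complex mat) \<in> carrier_mat m m" "0 < m"
  obtains \<mu> z where "z \<in> carrier_vec m" "z \<noteq> 0\<^sub>v m" "M *\<^sub>v z = \<mu> \<cdot>\<^sub>v z"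
proof -
  obtain \<mu> where "\<mu> \<in> spectrum M"
    using spectrum_non_empty[OF assms] by blast
  with assms(1) show thesis
    unfolding spectrum_def eigenvalue_def eigenvector_def using that by auto
qed

lemma cinner_orthonormal_tail_combination:
  assumes b: "orthonormal_family d d b" and i: "i < d"
  shows "cinner d (\<lambda>r. \<Sum>j<d - k. c j * b (k + j) r) (b i) = (if k \<le> i then c (i - k) else 0)"
proof -
  have "cinner d (\<lambda>r. \<Sum>j<d - k. c j * b (k + j) r) (b i) = (\<Sum>j<d - k. if j = i - k \<and> k \<le> i then c j else 0)"
    unfolding cinner_sum_left cinner_scale_left
    using b i unfolding orthonormal_family_def by (intro sum.cong) auto
  then show ?thesis
    using i by (auto simp: sum.If_cases)
qed

lemma selfadjoint_eigenvector_in_complement: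
  assumes A: "A \<in> carrier_mat d d" "mat_adjoint A = A"
    and b: "orthonormal_family d d b" and k: "k < d"
    and eigen: "\<forall>i<k. \<forall>r<d. mat_act d A (b i) r = ev i * b i r"
  obtains y \<mu> where "cinner d y y \<noteq> 0" "\<forall>i<k. cinner d y (b i) = 0" "\<forall>r<d. mat_act d A y r = \<mu> * y r"
proof -
  define m where "m = d - k"
  \<comment> \<open>The compression of \<open>A\<close> to the span of the \<open>b (k + j)\<close>, which is invariant under \<open>A\<close>.\<close>
  define M where "M = mat m m (\<lambda>(l, j). cinner d (mat_act d A (b (k + j))) (b (k + l)))"
  have M: "M \<in> carrier_mat m m" and "0 < m"
    unfolding M_def m_def using k by auto
  then obtain \<mu> z where z: "z \<in> carrier_vec m" "z \<noteq> 0\<^sub>v m" and Mz: "M *\<^sub>v z = \<mu> \<cdot>\<^sub>v z"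
    by (rule complex_mat_eigenvector_exists)
  define y where "y = (\<lambda>r. \<Sum>j<m. z $ j * b (k + j) r)"
  have coeff: "cinner d y (b i) = (if k \<le> i then z $ (i - k) else 0)" if "i < d" for i
    unfolding y_def m_def using cinner_orthonormal_tail_combination[OF b that] .
  have A_coeff: "cinner d (mat_act d A y) (b i) = \<mu> * cinner d y (b i)" if i: "i < d" for i
  proof (cases "k \<le> i")
    case True
    have "cinner d (mat_act d A y) (b i) = (M *\<^sub>v z) $ (i - k)"
      unfolding y_def mat_act_sum mat_act_scale cinner_sum_left cinner_scale_left
      using z M i True m_def by (simp add: M_def scalar_prod_def atLeast0LessThan mult.commute)
    with Mz z i True m_def show ?thesis
      by (simp add: coeff)
  next
    case False
    have "cinner d (mat_act d A y) (b i) = cinner d y (\<lambda>r. ev i * b i r)"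
      unfolding cinner_mat_act_selfadjoint[OF A] using eigen False by (intro cinner_cong) auto
    with False i show ?thesis
      by (simp add: cinner_scale_right coeff)
  qed
  have "mat_act d A y r = \<mu> * y r" if "r < d" for r
    using orthonormal_family_coeffs_eq[OF b, of "mat_act d A y" "\<lambda>r. \<mu> * y r" r] A_coeff that
    by (simp add: cinner_scale_left)
  moreover obtain l where l: "l < m" "z $ l \<noteq> 0"
    using z by (metis eq_vecI carrier_vecD index_zero_vec)
  then have "cinner d y y \<noteq> 0"
    using coeff[of "k + l"] m_def by (intro cinner_self_nonzero[of d y "b (k + l)"]) simp
  moreover have "\<forall>i<k. cinner d y (b i) = 0"
    using coeff k by simp
  ultimately show thesis
    using that by blast
qed

lemma selfadjoint_orthogonal_eigenvector:
  assumes A: "A \<in> carrier_mat d d" "mat_adjoint A = A"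
    and w: "orthonormal_family d k w" and k: "k < d"
    and eigen: "\<forall>i<k. \<forall>r<d. mat_act d A (w i) r = ev i * w i r"
  shows "\<exists>y \<mu>. cinner d y y = 1 \<and> (\<forall>i<k. cinner d y (w i) = 0) \<and>
               (\<forall>r<d. mat_act d A y r = \<mu> * y r)"
proof -
  obtain b where b: "orthonormal_family d d b" and bw: "\<forall>i<k. b i = w i"
    using orthonormal_family_extend[OF w] k by auto
  have "\<forall>i<k. \<forall>r<d. mat_act d A (b i) r = ev i * b i r"
    using eigen bw by simp
  then obtain y \<mu> where nonzero: "cinner d y y \<noteq> 0"
    and orth: "\<forall>i<k. cinner d y (b i) = 0" and y_eigen: "\<forall>r<d. mat_act d A y r = \<mu> * y r"
    by (rule selfadjoint_eigenvector_in_complement[OF A b k])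
  from nonzero obtain a where "cinner d (\<lambda>r. a * y r) (\<lambda>r. a * y r) = 1"
    by (rule exists_unit_multiple)
  with orth bw y_eigen show ?thesis
    by (intro exI[of _ "\<lambda>r. a * y r"] exI[of _ \<mu>]) (simp add: cinner_scale_left mat_act_scale)
qed

theorem selfadjoint_orthonormal_eigenbasis:
  assumes "A \<in> carrier_mat d d" "mat_adjoint A = A"
  shows "\<exists>w ev. orthonormal_family d d w \<and> (\<forall>i<d. \<forall>r<d. mat_act d A (w i) r = ev i * w i r)"
proof -
  have "k \<le> d \<Longrightarrow> \<exists>w ev. orthonormal_family d k w \<and> (\<forall>i<k. \<forall>r<d. mat_act d A (w i) r = ev i * w i r)"
    for k
  proof (induction k)
    case 0
    then show ?case
      unfolding orthonormal_family_def by auto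
  next
    case (Suc k)
    then obtain w ev where w: "orthonormal_family d k w"
      and eigen: "\<forall>i<k. \<forall>r<d. mat_act d A (w i) r = ev i * w i r"
      by auto
    obtain y \<mu> where y: "cinner d y y = 1" "\<forall>i<k. cinner d y (w i) = 0"
      and y_eigen: "\<forall>r<d. mat_act d A y r = \<mu> * y r"
      using selfadjoint_orthogonal_eigenvector[OF assms w _ eigen] Suc.prems by auto
    have "orthonormal_family d (Suc k) (w(k := y))"
      using orthonormal_family_snoc[OF w y] .
    moreover have "\<forall>i<Suc k. \<forall>r<d. mat_act d A ((w(k := y)) i) r = (ev(k := \<mu>)) i * (w(k := y)) i r"
      using eigen y_eigen by (auto simp: less_Suc_eq)
    ultimately show ?case
      by blast
  qed
  then show ?thesis
    by blast
qed

section \<open>The absolute value of a matrix\<close>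

lemma psd_cinner_nonneg: "psd Q \<Longrightarrow> Q \<in> carrier_mat d d \<Longrightarrow> 0 \<le> cinner d (mat_act d Q x) x"
proof -
  assume Q: "psd Q" "Q \<in> carrier_mat d d"
  have "0 \<le> (Q *\<^sub>v vec d x) \<bullet>c vec d x"
    using Q unfolding psd_def by auto
  also have "(Q *\<^sub>v vec d x) \<bullet>c vec d x = cinner d (mat_act d Q x) x"
    using Q by (simp add: cinner_def mat_act_def scalar_prod_def atLeast0LessThan)
  finally show ?thesis .
qed

lemma psd_selfadjoint: "psd Q \<Longrightarrow> mat_adjoint Q = Q"
  unfolding psd_def hermitian_def by blast

lemma psdI:
  assumes "Q \<in> carrier_mat d d" "mat_adjoint Q = Q" "\<And>x. 0 \<le> cinner d (mat_act d Q x) x"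
  shows "psd Q"
  unfolding psd_def hermitian_def
proof (intro conjI ballI)
  fix v :: "complex vec" assume "v \<in> carrier_vec (dim_row Q)"
  with assms(1) have "(Q *\<^sub>v v) \<bullet>c v = cinner d (mat_act d Q (\<lambda>i. v $ i)) (\<lambda>i. v $ i)"
    by (simp add: cinner_def mat_act_def scalar_prod_def atLeast0LessThan)
  then show "0 \<le> (Q *\<^sub>v v) \<bullet>c v"
    using assms(3) by simp
qed (use assms in auto)

definition spectral_mat :: "nat \<Rightarrow> (nat \<Rightarrow> nat \<Rightarrow> complex) \<Rightarrow> (nat \<Rightarrow> real) \<Rightarrow> complex mat" where
  "spectral_mat d w s = mat d d (\<lambda>(r, c). \<Sum>i<d. of_real (s i) * w i r * cnj (w i c))"

lemma spectral_mat_carrier: "spectral_mat d w s \<in> carrier_mat d d"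
  unfolding spectral_mat_def by simp

lemma mat_act_spectral_mat:
  "r < d \<Longrightarrow> mat_act d (spectral_mat d w s) x r = (\<Sum>i<d. of_real (s i) * cinner d x (w i) * w i r)"
proof -
  assume "r < d"
  then have "mat_act d (spectral_mat d w s) x r = (\<Sum>c<d. \<Sum>i<d. of_real (s i) * w i r * cnj (w i c) * x c)"
    unfolding mat_act_def spectral_mat_def by (simp add: sum_distrib_right)
  also have "\<dots> = (\<Sum>i<d. of_real (s i) * cinner d x (w i) * w i r)"
    unfolding cinner_def sum_distrib_left sum_distrib_right by (subst sum.swap) (simp add: ac_simps)
  finally show ?thesis .
qed

lemma mat_act_spectral_mat_basis:
  assumes w: "orthonormal_family d d w" and "j < d" "r < d"
  shows "mat_act d (spectral_mat d w s) (w j) r = of_real (s j) * w j r"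
proof -
  have "mat_act d (spectral_mat d w s) (w j) r = (\<Sum>i<d. if i = j then of_real (s j) * w j r else 0)"
    using w assms(2,3) unfolding mat_act_spectral_mat[OF assms(3)] orthonormal_family_def
    by (intro sum.cong) (auto simp: cinner_commute)
  then show ?thesis
    using assms(2) by simp
qed

lemma spectral_mat_selfadjoint: "mat_adjoint (spectral_mat d w s) = spectral_mat d w s"
  by (rule eq_matI) (auto simp: index_mat_adjoint spectral_mat_def cnj_sum ac_simps)

lemma psd_spectral_mat:
  assumes s: "\<And>i. 0 \<le> s i"
  shows "psd (spectral_mat d w s)"
proof (rule psdI[OF spectral_mat_carrier spectral_mat_selfadjoint])
  fix x
  have "cinner d (mat_act d (spectral_mat d w s) x) x
      = cinner d (\<lambda>r. \<Sum>i<d. of_real (s i) * cinner d x (w i) * w i r) x"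
    by (rule cinner_cong) (auto simp: mat_act_spectral_mat)
  also have "\<dots> = (\<Sum>i<d. of_real (s i) * (cinner d x (w i) * cnj (cinner d x (w i))))"
    unfolding cinner_sum_left cinner_scale_left by (simp add: cinner_commute mult.assoc)
  also have "\<dots> = of_real (\<Sum>i<d. s i * (cmod (cinner d x (w i)))\<^sup>2)"
    unfolding of_real_sum of_real_mult complex_norm_square ..
  finally show "0 \<le> cinner d (mat_act d (spectral_mat d w s) x) x"
    using s by (simp add: less_eq_complex_def sum_nonneg)
qed

lemma trace_spectral_mat:
  assumes w: "orthonormal_family d d w"
  shows "mTr (spectral_mat d w s) = of_real (\<Sum>i<d. s i)"
  using w unfolding trace_orthonormal_basis[OF w spectral_mat_carrier] orthonormal_family_def
  by (simp add: mat_act_spectral_mat_basis[OF w] cinner_scale_left cong: cinner_cong)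

lemma psd_sqrt_eigenvector:
  assumes Q: "Q \<in> carrier_mat d d" "psd Q" and M: "Q * Q = M"
    and eigen: "\<And>r. r < d \<Longrightarrow> mat_act d M x r = of_real (s\<^sup>2) * x r" and s: "0 \<le> s" and r: "r < d"
  shows "mat_act d Q x r = of_real s * x r"
proof -
  have QQ: "mat_act d Q (mat_act d Q y) r = mat_act d M y r" if "r < d" for y r
    using mat_act_mult[OF Q(1) Q(1) that] M by simp
  show ?thesis
  proof (cases "s = 0")
    case True
    have "cinner d (mat_act d Q x) (mat_act d Q x) = cinner d x (mat_act d Q (mat_act d Q x))"
      by (rule cinner_mat_act_selfadjoint[OF Q(1) psd_selfadjoint[OF Q(2)]])
    also have "\<dots> = 0"
      using True eigen by (simp add: QQ cinner_def)
    finally show ?thesis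
      using True cinner_self_eq_0[OF _ r] by simp
  next
    case False
    \<comment> \<open>\<open>u = Q x - s x\<close> satisfies \<open>Q u = - s u\<close>, which positivity of \<open>Q\<close> forbids unless \<open>u = 0\<close>.\<close>
    define u where "u = (\<lambda>r. mat_act d Q x r - of_real s * x r)"
    have "mat_act d Q u r = - of_real s * u r" if "r < d" for r
      unfolding u_def mat_act_diff mat_act_scale QQ[OF that] eigen[OF that]
      by (simp add: algebra_simps power2_eq_square)
    then have "cinner d (mat_act d Q u) u = cinner d (\<lambda>r. - of_real s * u r) u"
      by (intro cinner_cong) auto
    then have "cinner d (mat_act d Q u) u = - of_real s * cinner d u u"
      by (simp only: cinner_scale_left)
    then have "cinner d (mat_act d Q u) u = of_real (- s * Re (cinner d u u))"
      by (subst (asm) cinner_self_real) simp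
    then have "0 \<le> - s * Re (cinner d u u)"
      using psd_cinner_nonneg[OF Q(2,1), of u] by (simp add: less_eq_complex_def)
    then have "Re (cinner d u u) = 0"
      using False s cinner_self_nonneg[of d u] by (simp add: mult_le_0_iff)
    then have "cinner d u u = 0"
      by (subst cinner_self_real) simp
    then show ?thesis
      using cinner_self_eq_0[of d u r] r unfolding u_def by simp
  qed
qed

lemma psd_sqrt_iff_spectral_mat:
  assumes w: "orthonormal_family d d w" and s: "\<And>i. 0 \<le> s i" and M: "M \<in> carrier_mat d d"
    and M_eigen: "\<And>i r. i < d \<Longrightarrow> r < d \<Longrightarrow> mat_act d M (w i) r = of_real ((s i)\<^sup>2) * w i r"
  shows "Q \<in> carrier_mat d d \<and> psd Q \<and> Q * Q = M \<longleftrightarrow> Q = spectral_mat d w s"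
proof -
  define P where "P = spectral_mat d w s"
  have P: "P \<in> carrier_mat d d" "psd P"
    unfolding P_def using s by (simp_all add: spectral_mat_carrier psd_spectral_mat)
  have P_eigen: "mat_act d P (w i) r = of_real (s i) * w i r" if "i < d" "r < d" for i r
    unfolding P_def using mat_act_spectral_mat_basis[OF w that] .
  have PP: "P * P = M"
  proof (rule mat_eq_by_orthonormal_basis[OF w _ M])
    fix i r assume i: "i < d" and r: "r < d"
    have "mat_act d (P * P) (w i) r = mat_act d P (\<lambda>r. of_real (s i) * w i r) r"
      unfolding mat_act_mult[OF P(1) P(1) r] using P_eigen[OF i] by (intro mat_act_cong) simp
    also have "\<dots> = mat_act d M (w i) r"
      unfolding mat_act_scale P_eigen[OF i r] M_eigen[OF i r] by (simp add: power2_eq_square)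
    finally show "mat_act d (P * P) (w i) r = mat_act d M (w i) r" .
  qed (use P in simp)
  show ?thesis
    unfolding P_def[symmetric]
  proof
    assume Q: "Q \<in> carrier_mat d d \<and> psd Q \<and> Q * Q = M"
    show "Q = P"
    proof (rule mat_eq_by_orthonormal_basis[OF w _ P(1)])
      fix i r assume "i < d" "r < d"
      with Q psd_sqrt_eigenvector[of Q d M, OF _ _ _ M_eigen s] P_eigen
      show "mat_act d Q (w i) r = mat_act d P (w i) r"
        by simp
    qed (use Q in simp)
  qed (use P PP in simp)
qed

theorem mat_abs_spectral:
  assumes X: "X \<in> carrier_mat d d"
  obtains w s where "orthonormal_family d d w" "\<And>i. 0 \<le> s i"
    "\<And>i. i < d \<Longrightarrow> Re (cinner d (mat_act d X (w i)) (mat_act d X (w i))) = (s i)\<^sup>2"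
    "mat_abs X = spectral_mat d w s"
proof -
  define M where "M = mat_adjoint X * X"
  have M: "M \<in> carrier_mat d d" "mat_adjoint M = M"
    unfolding M_def using X mat_adjoint_mult[OF mat_adjoint_carrier[OF X] X]
    by (auto simp: mat_adjoint_adjoint)
  obtain w ev where w: "orthonormal_family d d w"
    and eigen: "\<forall>i<d. \<forall>r<d. mat_act d M (w i) r = ev i * w i r"
    using selfadjoint_orthonormal_eigenbasis[OF M] by blast
  define s where "s i = sqrt (Re (cinner d (mat_act d X (w i)) (mat_act d X (w i))))" for i
  have s: "0 \<le> s i" for i
    unfolding s_def using cinner_self_nonneg by simp
  have norm_Xw: "Re (cinner d (mat_act d X (w i)) (mat_act d X (w i))) = (s i)\<^sup>2" for i
    unfolding s_def using cinner_self_nonneg by simp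
  have M_eigen: "mat_act d M (w i) r = of_real ((s i)\<^sup>2) * w i r" if i: "i < d" and r: "r < d" for i r
  proof -
    have "cinner d (mat_act d X (w i)) (mat_act d X (w i)) = cinner d (w i) (\<lambda>r. ev i * w i r)"
      unfolding cinner_mat_act_gram[OF X] M_def[symmetric] using eigen i by (intro cinner_cong) auto
    also have "\<dots> = cnj (ev i)"
      using w i unfolding orthonormal_family_def cinner_scale_right by simp
    finally have "cnj (ev i) = of_real ((s i)\<^sup>2)"
      using cinner_self_real norm_Xw by metis
    then have "ev i = of_real ((s i)\<^sup>2)"
      by (metis complex_cnj_cnj complex_cnj_complex_of_real)
    with eigen i r show ?thesis
      by simp
  qed
  note sqrt_iff = psd_sqrt_iff_spectral_mat[OF w s M(1) M_eigen]
  have "mat_abs X = spectral_mat d w s"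
    unfolding mat_abs_def M_def[symmetric]
  proof (rule the_equality)
    show "spectral_mat d w s \<in> carrier_mat (dim_col X) (dim_col X) \<and> psd (spectral_mat d w s) \<and>
      spectral_mat d w s * spectral_mat d w s = M"
      using sqrt_iff[of "spectral_mat d w s"] X by simp
  qed (use sqrt_iff X in simp)
  with w s norm_Xw show thesis
    by (rule that)
qed

lemma mat_abs_carrier: "X \<in> carrier_mat d d \<Longrightarrow> mat_abs X \<in> carrier_mat d d"
  by (metis mat_abs_spectral spectral_mat_carrier)

section \<open>Density matrices\<close>

definition pure_state :: "nat \<Rightarrow> (nat \<Rightarrow> complex) \<Rightarrow> complex mat" where
  "pure_state d y = mat d d (\<lambda>(i, j). y i * cnj (y j))"

lemma density_pure_state:
  assumes y: "cinner d y y = 1"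
  shows "density d (pure_state d y)"
proof -
  have carrier: "pure_state d y \<in> carrier_mat d d"
    unfolding pure_state_def by simp
  have "mat_adjoint (pure_state d y) = pure_state d y"
    by (rule eq_matI) (auto simp: pure_state_def index_mat_adjoint)
  moreover have "0 \<le> cinner d (mat_act d (pure_state d y) x) x" for x
  proof -
    have "cinner d (mat_act d (pure_state d y) x) x = cinner d (\<lambda>r. cinner d x y * y r) x"
      unfolding mat_act_def cinner_def pure_state_def
      by (intro sum.cong refl) (simp add: sum_distrib_left sum_distrib_right ac_simps)
    also have "\<dots> = of_real ((cmod (cinner d x y))\<^sup>2)"
      unfolding cinner_scale_left complex_norm_square by (simp add: cinner_commute)
    finally show ?thesis
      by (simp add: less_eq_complex_def)
  qed
  moreover have "mTr (pure_state d y) = 1"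
    using y unfolding mTr_def cinner_def pure_state_def by simp
  ultimately show ?thesis
    unfolding density_def using carrier psdI[OF carrier] by blast
qed

lemma trace_mult_pure_state:
  "A \<in> carrier_mat d d \<Longrightarrow> mTr (A * pure_state d y) = cinner d (mat_act d A y) y"
  unfolding mTr_def cinner_def mat_act_def pure_state_def
  by (simp add: scalar_prod_def atLeast0LessThan sum_distrib_left sum_distrib_right ac_simps)

lemma cmod_cinner_mat_act_le:
  assumes x: "cinner d x x = 1"
  shows "cmod (cinner d (mat_act d A x) x) \<le> (\<Sum>r<d. \<Sum>c<d. cmod (A $$ (r, c)))"
proof -
  have x_le: "cmod (x r) \<le> 1" if "r < d" for r
  proof -
    have "(cmod (x r))\<^sup>2 \<le> (\<Sum>r<d. (cmod (x r))\<^sup>2)"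
      using that by (intro member_le_sum) auto
    also have "\<dots> = 1"
      using x unfolding cinner_self by (metis of_real_eq_1_iff)
    finally show ?thesis
      by (simp add: power_le_one_iff)
  qed
  have "cmod (cinner d (mat_act d A x) x) \<le> (\<Sum>r<d. \<Sum>c<d. cmod (A $$ (r, c)) * cmod (x c) * cmod (x r))"
    unfolding cinner_def mat_act_def sum_distrib_right
    by (rule order_trans[OF norm_sum], intro sum_mono order_trans[OF norm_sum]) (simp add: norm_mult)
  also have "\<dots> \<le> (\<Sum>r<d. \<Sum>c<d. cmod (A $$ (r, c)))"
    using x_le by (intro sum_mono) (metis lessThan_iff mult.assoc mult_left_le mult_le_one norm_ge_zero)
  finally show ?thesis .
qed

lemma density_trace_bound:
  assumes \<rho>: "density d \<rho>" and A: "A \<in> carrier_mat d d"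
  shows "cmod (mTr (A * \<rho>)) \<le> (\<Sum>r<d. \<Sum>c<d. cmod (A $$ (r, c)))"
proof -
  \<comment> \<open>In an eigenbasis of \<open>\<rho>\<close>, \<open>Tr (A \<rho>)\<close> is a convex combination of the \<open>\<langle>A w i, w i\<rangle>\<close>.\<close>
  have \<rho>_carrier: "\<rho> \<in> carrier_mat d d" and "psd \<rho>" and "mTr \<rho> = 1"
    using \<rho> unfolding density_def by auto
  then obtain w ev where w: "orthonormal_family d d w"
    and eigen: "\<forall>i<d. \<forall>r<d. mat_act d \<rho> (w i) r = ev i * w i r"
    using selfadjoint_orthonormal_eigenbasis psd_selfadjoint by blast
  have unit: "cinner d (w i) (w i) = 1" if "i < d" for i
    using w that unfolding orthonormal_family_def by simp
  have ev: "ev i = cinner d (mat_act d \<rho> (w i)) (w i)" if "i < d" for i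
    using eigen that by (simp add: cinner_scale_left unit cong: cinner_cong)
  then have ev_nonneg: "0 \<le> ev i" if "i < d" for i
    using psd_cinner_nonneg[OF \<open>psd \<rho>\<close> \<rho>_carrier] that by simp
  have "(\<Sum>i<d. ev i) = 1"
    using \<open>mTr \<rho> = 1\<close> ev unfolding trace_orthonormal_basis[OF w \<rho>_carrier] by simp
  then have sum_ev: "(\<Sum>i<d. cmod (ev i)) = 1"
    using ev_nonneg by (simp add: cmod_eq_Re less_eq_complex_def flip: Re_sum)
  have "mat_act d (A * \<rho>) (w i) r = ev i * mat_act d A (w i) r" if "i < d" "r < d" for i r
    using A \<rho>_carrier eigen that mat_act_cong[of d "mat_act d \<rho> (w i)" "\<lambda>r. ev i * w i r" A r]
    by (simp add: mat_act_mult mat_act_scale)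
  then have "mTr (A * \<rho>) = (\<Sum>i<d. ev i * cinner d (mat_act d A (w i)) (w i))"
    unfolding trace_orthonormal_basis[OF w mult_carrier_mat[OF A \<rho>_carrier]]
    by (intro sum.cong refl) (simp add: cinner_scale_left[symmetric] cong: cinner_cong)
  also have "cmod \<dots> \<le> (\<Sum>i<d. cmod (ev i) * (\<Sum>r<d. \<Sum>c<d. cmod (A $$ (r, c))))"
    using cmod_cinner_mat_act_le[OF unit]
    by (intro order_trans[OF norm_sum] sum_mono) (simp add: norm_mult mult_left_mono)
  finally show ?thesis
    by (simp add: sum_distrib_right[symmetric] sum_ev)
qed

section \<open>Majorana monomials\<close>

lemma smult_smult_mat: "a \<cdot>\<^sub>m (b \<cdot>\<^sub>m A) = (a * b :: 'a :: semigroup_mult) \<cdot>\<^sub>m A"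
  by (rule eq_matI) (auto simp: mult.assoc)

lemma one_smult_mat [simp]: "(1 :: 'a :: monoid_mult) \<cdot>\<^sub>m A = A"
  by (rule eq_matI) auto

lemma mat_adjoint_smult: "mat_adjoint (c \<cdot>\<^sub>m A) = cnj c \<cdot>\<^sub>m mat_adjoint A"
  by (rule eq_matI) (auto simp: index_mat_adjoint)

lemma mat_adjoint_one: "mat_adjoint (1\<^sub>m d :: complex mat) = 1\<^sub>m d"
  by (rule eq_matI) (auto simp: index_mat_adjoint)

definition psi_prod :: "nat \<Rightarrow> (nat \<Rightarrow> complex mat) \<Rightarrow> nat list \<Rightarrow> complex mat" where
  "psi_prod d \<psi> L = foldr (\<lambda>i M. \<psi> i * M) L (1\<^sub>m d)"

lemma psi_prod_simps [simp]:
  "psi_prod d \<psi> [] = 1\<^sub>m d"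
  "psi_prod d \<psi> (a # L) = \<psi> a * psi_prod d \<psi> L"
  by (simp_all add: psi_prod_def)

lemma minus_one_power_sum_less_double: "(-1 :: complex) ^ (\<Sum>j<2 * m. j) = (-1) ^ m"
proof (induction m)
  case (Suc m)
  have "(\<Sum>j<2 * Suc m. j) = (\<Sum>j<2 * m. j) + 2 * (2 * m) + 1"
    by simp
  with Suc show ?case
    by (simp add: power_add power_mult)
qed simp

context
  fixes n d :: nat and \<psi> :: "nat \<Rightarrow> complex mat"
  assumes majorana: "majorana n d \<psi>"
begin

lemma psi_carrier: "i < n \<Longrightarrow> \<psi> i \<in> carrier_mat d d"
  using majorana unfolding majorana_def by auto

lemma psi_selfadjoint: "i < n \<Longrightarrow> mat_adjoint (\<psi> i) = \<psi> i"
  using majorana unfolding majorana_def hermitian_def by auto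

lemma psi_anticommute:
  assumes "a < n" "b < n" "a \<noteq> b"
  shows "\<psi> b * \<psi> a = (-1) \<cdot>\<^sub>m (\<psi> a * \<psi> b)"
proof -
  have sum0: "\<psi> b * \<psi> a + \<psi> a * \<psi> b = 0 \<cdot>\<^sub>m 1\<^sub>m d"
    using majorana assms unfolding majorana_def by auto
  have a: "\<psi> a \<in> carrier_mat d d" and b: "\<psi> b \<in> carrier_mat d d"
    using psi_carrier assms by auto
  show ?thesis
  proof (rule eq_matI)
    fix i j assume "i < dim_row ((-1) \<cdot>\<^sub>m (\<psi> a * \<psi> b))" "j < dim_col ((-1) \<cdot>\<^sub>m (\<psi> a * \<psi> b))"
    then have ij: "i < d" "j < d"
      using a b by auto
    have "(\<psi> b * \<psi> a) $$ (i, j) + (\<psi> a * \<psi> b) $$ (i, j) = (\<psi> b * \<psi> a + \<psi> a * \<psi> b) $$ (i, j)"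
      using ij a b by simp
    also have "\<dots> = 0"
      unfolding sum0 using ij by simp
    finally show "(\<psi> b * \<psi> a) $$ (i, j) = ((-1) \<cdot>\<^sub>m (\<psi> a * \<psi> b)) $$ (i, j)"
      using ij a b by (simp add: eq_neg_iff_add_eq_0)
  qed (use a b in auto)
qed

lemma psi_prod_carrier: "set L \<subseteq> {..<n} \<Longrightarrow> psi_prod d \<psi> L \<in> carrier_mat d d"
  by (induction L) (auto intro!: mult_carrier_mat psi_carrier)

lemma psiI_carrier: "I \<subseteq> {..<n} \<Longrightarrow> psiI d \<psi> I \<in> carrier_mat d d"
  unfolding psiI_def using psi_prod_carrier[of "sorted_list_of_set I"] finite_subset[of I "{..<n}"]
  by (simp add: psi_prod_def)

lemma psi_prod_snoc:
  "set L \<subseteq> {..<n} \<Longrightarrow> a < n \<Longrightarrow> psi_prod d \<psi> (L @ [a]) = psi_prod d \<psi> L * \<psi> a"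
proof (induction L)
  case Nil
  then show ?case
    using psi_carrier[of a] by simp
next
  case (Cons b L)
  then show ?case
    using psi_carrier psi_prod_carrier by (simp add: assoc_mult_mat[of _ d d _ d _ d])
qed

lemma psi_prod_adjoint: "set L \<subseteq> {..<n} \<Longrightarrow> mat_adjoint (psi_prod d \<psi> L) = psi_prod d \<psi> (rev L)"
proof (induction L)
  case Nil
  then show ?case
    by (simp add: mat_adjoint_one)
next
  case (Cons a L)
  then have "mat_adjoint (psi_prod d \<psi> (a # L)) = psi_prod d \<psi> (rev L) * \<psi> a"
    using psi_selfadjoint by (simp add: mat_adjoint_mult[OF psi_carrier psi_prod_carrier])
  with Cons.prems show ?case
    by (simp add: psi_prod_snoc)
qed

lemma psi_prod_mult_psi:
  "set L \<subseteq> {..<n} \<Longrightarrow> a < n \<Longrightarrow> a \<notin> set L \<Longrightarrow>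
   psi_prod d \<psi> L * \<psi> a = (-1) ^ length L \<cdot>\<^sub>m (\<psi> a * psi_prod d \<psi> L)"
proof (induction L)
  case Nil
  then show ?case
    using psi_carrier[of a] by simp
next
  case (Cons b L)
  have a: "\<psi> a \<in> carrier_mat d d" and b: "\<psi> b \<in> carrier_mat d d"
    and L: "psi_prod d \<psi> L \<in> carrier_mat d d"
    using Cons.prems psi_carrier psi_prod_carrier by auto
  have "psi_prod d \<psi> (b # L) * \<psi> a = \<psi> b * (psi_prod d \<psi> L * \<psi> a)"
    using a b L by simp
  also have "\<dots> = (-1) ^ length L \<cdot>\<^sub>m ((\<psi> b * \<psi> a) * psi_prod d \<psi> L)"
    using Cons a b L mult_smult_distrib[OF b, of "\<psi> a * psi_prod d \<psi> L" d]
    by (simp add: assoc_mult_mat[of _ d d _ d _ d])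
  also have "\<psi> b * \<psi> a = (-1) \<cdot>\<^sub>m (\<psi> a * \<psi> b)"
    using Cons.prems by (intro psi_anticommute) auto
  also have "(-1) ^ length L \<cdot>\<^sub>m (((-1) \<cdot>\<^sub>m (\<psi> a * \<psi> b)) * psi_prod d \<psi> L)
      = (-1) ^ length (b # L) \<cdot>\<^sub>m (\<psi> a * psi_prod d \<psi> (b # L))"
    using a b L
    by (simp add: mult_smult_assoc_mat[of _ d d] smult_smult_mat assoc_mult_mat[of _ d d _ d _ d])
  finally show ?case .
qed

lemma psi_prod_rev:
  "distinct L \<Longrightarrow> set L \<subseteq> {..<n} \<Longrightarrow>
   psi_prod d \<psi> (rev L) = (-1) ^ (\<Sum>j<length L. j) \<cdot>\<^sub>m psi_prod d \<psi> L"
proof (induction L)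
  case (Cons a L)
  have a: "\<psi> a \<in> carrier_mat d d" and L: "psi_prod d \<psi> L \<in> carrier_mat d d"
    using Cons.prems psi_carrier psi_prod_carrier by auto
  have "psi_prod d \<psi> (rev (a # L)) = ((-1) ^ (\<Sum>j<length L. j) \<cdot>\<^sub>m psi_prod d \<psi> L) * \<psi> a"
    using Cons by (simp add: psi_prod_snoc)
  also have "\<dots> = (-1) ^ (\<Sum>j<length L. j) \<cdot>\<^sub>m ((-1) ^ length L \<cdot>\<^sub>m (\<psi> a * psi_prod d \<psi> L))"
    using Cons.prems a L by (simp add: mult_smult_assoc_mat[of _ d d] psi_prod_mult_psi)
  finally show ?case
    by (simp add: smult_smult_mat power_add)
qed simp

lemma psiI_selfadjoint:
  assumes I: "I \<subseteq> {..<n}" and even: "even (card I)"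
  shows "mat_adjoint (psiI d \<psi> I) = psiI d \<psi> I"
proof -
  define L where "L = sorted_list_of_set I"
  have "finite I"
    using I finite_subset by blast
  then have L: "distinct L" "set L \<subseteq> {..<n}" "length L = card I"
    using I unfolding L_def by auto
  obtain m where m: "card I = 2 * m"
    using even by blast
  define \<theta> where "\<theta> = pi * real (card I) / 4"
  have psiI: "psiI d \<psi> I = cis \<theta> \<cdot>\<^sub>m psi_prod d \<psi> L"
    unfolding psiI_def psi_prod_def L_def \<theta>_def ..
  \<comment> \<open>The phase \<open>i^(q/2)\<close> exactly compensates the sign \<open>(-1)^(q(q-1)/2)\<close> of reversing the product.\<close>
  have "cis (2 * \<theta>) = (-1) ^ m"
    unfolding \<theta>_def m using DeMoivre[of pi m] by (simp add: mult.commute)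
  then have phase: "cnj (cis \<theta>) * (-1) ^ (\<Sum>j<card I. j) = cis \<theta>"
    unfolding m minus_one_power_sum_less_double
    by (metis cis_cnj cis_mult diff_add_cancel mult_2 mult.commute add_uminus_conv_diff)
  show ?thesis
    unfolding psiI mat_adjoint_smult psi_prod_adjoint[OF L(2)] psi_prod_rev[OF L(1,2)]
      smult_smult_mat L(3) phase ..
qed

end

section \<open>Trace bounds from bounds on pure states\<close>

lemma sum_power2_sum_le:
  fixes f :: "'j \<Rightarrow> 'i \<Rightarrow> real"
  assumes "finite S" "finite J" "0 \<le> c"
    and s: "\<And>j. j \<in> J \<Longrightarrow> 0 \<le> s j"
    and f: "\<And>j. j \<in> J \<Longrightarrow> (\<Sum>I\<in>S. (f j I)\<^sup>2) \<le> c * (s j)\<^sup>2"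
  shows "(\<Sum>I\<in>S. (\<Sum>j\<in>J. f j I)\<^sup>2) \<le> c * (\<Sum>j\<in>J. s j)\<^sup>2"
proof -
  have "L2_set (\<lambda>I. \<Sum>j\<in>J. f j I) S \<le> (\<Sum>j\<in>J. L2_set (f j) S)"
    using \<open>finite J\<close>
  proof (induction J rule: finite_induct)
    case (insert j J)
    then show ?case
      using L2_set_triangle_ineq[of "f j" "\<lambda>I. \<Sum>j\<in>J. f j I" S] by simp
  qed (simp add: L2_set_0')
  also have "\<dots> \<le> (\<Sum>j\<in>J. sqrt c * s j)"
  proof (rule sum_mono)
    fix j assume "j \<in> J"
    then have "L2_set (f j) S \<le> sqrt (c * (s j)\<^sup>2)"
      unfolding L2_set_def using f by simp
    with s \<open>j \<in> J\<close> show "L2_set (f j) S \<le> sqrt c * s j"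
      by (simp add: real_sqrt_mult)
  qed
  finally have "(L2_set (\<lambda>I. \<Sum>j\<in>J. f j I) S)\<^sup>2 \<le> (sqrt c * (\<Sum>j\<in>J. s j))\<^sup>2"
    by (intro power_mono) (auto simp: sum_distrib_left)
  with \<open>0 \<le> c\<close> show ?thesis
    unfolding L2_set_def by (simp add: sum_nonneg power_mult_distrib)
qed

locale bounded_pure_expectations =
  fixes d :: nat and S :: "'i set" and A :: "'i \<Rightarrow> complex mat" and K :: real
  assumes dim_pos: "0 < d"
    and finite_S: "finite S"
    and A_carrier: "I \<in> S \<Longrightarrow> A I \<in> carrier_mat d d"
    and A_selfadjoint: "I \<in> S \<Longrightarrow> mat_adjoint (A I) = A I"
    and pure_bound: "cinner d y y = 1 \<Longrightarrow> (\<Sum>I\<in>S. (Re (cinner d (mat_act d (A I) y) y))\<^sup>2) \<le> K"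
begin

lemma K_nonneg: "0 \<le> K"
  using pure_bound[OF cinner_delta_self[OF dim_pos]] by (rule order_trans[rotated]) (simp add: sum_nonneg)

lemma quadratic_form_bound:
  "(\<Sum>I\<in>S. (Re (cinner d (mat_act d (A I) y) y))\<^sup>2) \<le> K * (Re (cinner d y y))\<^sup>2"
proof (cases "cinner d y y = 0")
  case True
  then have "\<forall>r<d. y r = 0"
    using cinner_self_eq_0 by blast
  then show ?thesis
    by (simp add: cinner_def)
next
  case False
  then obtain c where unit: "cinner d (\<lambda>r. c * y r) (\<lambda>r. c * y r) = 1"
    by (rule exists_unit_multiple)
  define t where "t = Re (cinner d y y)"
  have ct: "c * cnj c * of_real t = 1"
    using unit unfolding cinner_scale_left cinner_scale_right t_def
    by (subst (asm) cinner_self_real) (simp add: ac_simps)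
  then have "t \<noteq> 0"
    by auto
  with ct have c: "c * cnj c = of_real (1 / t)"
    by (simp add: eq_divide_eq)
  have "cinner d (mat_act d (A I) (\<lambda>r. c * y r)) (\<lambda>r. c * y r) = c * cnj c * cinner d (mat_act d (A I) y) y"
    for I
    by (simp add: mat_act_scale cinner_scale_left cinner_scale_right mult.assoc)
  then have "(\<Sum>I\<in>S. (Re (cinner d (mat_act d (A I) y) y) / t)\<^sup>2) \<le> K"
    using pure_bound[OF unit] by (simp add: c)
  then show ?thesis
    using \<open>t \<noteq> 0\<close> unfolding t_def[symmetric]
    by (simp add: power_divide sum_divide_distrib[symmetric] divide_le_eq)
qed

lemma real_form_bound:
  "(\<Sum>I\<in>S. (Re (cinner d (mat_act d (A I) u) v))\<^sup>2) \<le> K * (Re (cinner d u u) + Re (cinner d v v))\<^sup>2 / 4"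
proof -
  define p where "p = (\<lambda>r. v r + u r)"
  define m where "m = (\<lambda>r. v r - u r)"
  let ?q = "\<lambda>I x. Re (cinner d (mat_act d (A I) x) x)"
  have polarization: "?q I p - ?q I m = 4 * Re (cinner d (mat_act d (A I) u) v)" if "I \<in> S" for I
  proof -
    have "cinner d (mat_act d (A I) v) u = cnj (cinner d (mat_act d (A I) u) v)"
      using cinner_mat_act_selfadjoint[OF A_carrier A_selfadjoint, OF that that]
      by (metis cinner_commute)
    then show ?thesis
      unfolding p_def m_def mat_act_add mat_act_diff cinner_add_left cinner_add_right
        cinner_diff_left cinner_diff_right
      by simp
  qed
  have norms: "(\<Sum>j\<in>UNIV. if j then Re (cinner d p p) else Re (cinner d m m))
      = 2 * (Re (cinner d u u) + Re (cinner d v v))"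
    unfolding p_def m_def cinner_add_left cinner_add_right cinner_diff_left cinner_diff_right
    by (simp add: UNIV_bool)
  have "(\<Sum>I\<in>S. (\<Sum>j\<in>UNIV. (if j then ?q I p else - ?q I m))\<^sup>2)
      \<le> K * (\<Sum>j\<in>UNIV. if j then Re (cinner d p p) else Re (cinner d m m))\<^sup>2"
    using quadratic_form_bound[of p] quadratic_form_bound[of m]
    by (intro sum_power2_sum_le finite_S K_nonneg) (auto simp: cinner_self_nonneg)
  then have "(\<Sum>I\<in>S. (4 * Re (cinner d (mat_act d (A I) u) v))\<^sup>2)
      \<le> K * (2 * (Re (cinner d u u) + Re (cinner d v v)))\<^sup>2"
    unfolding norms by (simp add: UNIV_bool polarization cong: sum.cong)
  moreover have "(\<Sum>I\<in>S. (4 * Re (cinner d (mat_act d (A I) u) v))\<^sup>2)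
      = 16 * (\<Sum>I\<in>S. (Re (cinner d (mat_act d (A I) u) v))\<^sup>2)"
    by (simp add: power_mult_distrib sum_distrib_left)
  moreover have "K * (2 * (Re (cinner d u u) + Re (cinner d v v)))\<^sup>2
      = 16 * (K * (Re (cinner d u u) + Re (cinner d v v))\<^sup>2 / 4)"
    unfolding power_mult_distrib by simp
  ultimately show ?thesis
    by linarith
qed

lemma form_bound:
  "(\<Sum>I\<in>S. (cmod (cinner d (mat_act d (A I) u) v))\<^sup>2) \<le> K * (Re (cinner d u u) + Re (cinner d v v))\<^sup>2 / 2"
proof -
  define iu where "iu = (\<lambda>r. \<i> * u r)"
  \<comment> \<open>The imaginary part of the form at \<open>u\<close> is the real part of the form at \<open>\<i> u\<close>.\<close>
  have "cinner d (mat_act d (A I) iu) v = \<i> * cinner d (mat_act d (A I) u) v" for I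
    unfolding iu_def mat_act_scale cinner_scale_left ..
  moreover have "cinner d iu iu = cinner d u u"
    unfolding iu_def cinner_scale_left cinner_scale_right by simp
  ultimately show ?thesis
    using real_form_bound[of u v] real_form_bound[of iu v]
    by (simp add: cmod_power2 sum.distrib)
qed

lemma form_bound_unit:
  assumes w: "cinner d w w = 1"
  shows "(\<Sum>I\<in>S. (cmod (cinner d (mat_act d (A I) x) w))\<^sup>2) \<le> 2 * K * Re (cinner d x x)"
proof -
  define s where "s = sqrt (Re (cinner d x x))"
  have s: "0 \<le> s" "Re (cinner d x x) = s\<^sup>2"
    unfolding s_def using cinner_self_nonneg by auto
  \<comment> \<open>Rescaling \<open>w\<close> to the length of \<open>x\<close> balances the two terms of \<open>form_bound\<close>.\<close>
  have "s\<^sup>2 * (\<Sum>I\<in>S. (cmod (cinner d (mat_act d (A I) x) w))\<^sup>2)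
      = (\<Sum>I\<in>S. (cmod (cinner d (mat_act d (A I) x) (\<lambda>r. of_real s * w r)))\<^sup>2)"
    by (simp add: cinner_scale_right norm_mult power_mult_distrib sum_distrib_left)
  also have "\<dots> \<le> K * (s\<^sup>2 + s\<^sup>2)\<^sup>2 / 2"
    using form_bound[of x "\<lambda>r. of_real s * w r"] s w
    by (simp add: cinner_scale_left cinner_scale_right power2_eq_square)
  also have "\<dots> = s\<^sup>2 * (2 * K * s\<^sup>2)"
    by (simp add: power2_eq_square)
  finally have "s\<^sup>2 * (\<Sum>I\<in>S. (cmod (cinner d (mat_act d (A I) x) w))\<^sup>2) \<le> s\<^sup>2 * (2 * K * s\<^sup>2)" .
  show ?thesis
  proof (cases "s = 0")
    case True
    then have "cinner d x x = 0"
      using s(2) cinner_self_real[of d x] by simp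
    then have "\<forall>r<d. x r = 0"
      using cinner_self_eq_0 by blast
    then show ?thesis
      by (simp add: cinner_def mat_act_def)
  next
    case False
    with \<open>s\<^sup>2 * _ \<le> _\<close> s show ?thesis
      by simp
  qed
qed

theorem trace_bound:
  assumes X: "X \<in> carrier_mat d d"
  shows "(\<Sum>I\<in>S. (cmod (mTr (A I * X)))\<^sup>2) \<le> 2 * K * (Re (mTr (mat_abs X)))\<^sup>2"
proof -
  obtain w s where w: "orthonormal_family d d w" and s: "\<And>i. 0 \<le> s i"
    and norm_Xw: "\<And>i. i < d \<Longrightarrow> Re (cinner d (mat_act d X (w i)) (mat_act d X (w i))) = (s i)\<^sup>2"
    and abs_X: "mat_abs X = spectral_mat d w s"
    using mat_abs_spectral[OF X] by blast
  define z where "z I i = cinner d (mat_act d (A I) (mat_act d X (w i))) (w i)" for I i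
  have trace: "mTr (A I * X) = (\<Sum>i<d. z I i)" if "I \<in> S" for I
    unfolding trace_orthonormal_basis[OF w mult_carrier_mat[OF A_carrier[OF that] X]] z_def
    using A_carrier[OF that] X by (intro sum.cong refl cinner_cong) (auto simp: mat_act_mult)
  have "(\<Sum>I\<in>S. (cmod (\<Sum>i<d. z I i))\<^sup>2) \<le> (\<Sum>I\<in>S. (\<Sum>i<d. cmod (z I i))\<^sup>2)"
    by (intro sum_mono power_mono norm_sum) simp
  also have "\<dots> \<le> 2 * K * (\<Sum>i<d. s i)\<^sup>2"
  proof (rule sum_power2_sum_le[OF finite_S])
    fix i assume "i \<in> {..<d}"
    then show "(\<Sum>I\<in>S. (cmod (z I i))\<^sup>2) \<le> 2 * K * (s i)\<^sup>2"
      using form_bound_unit[of "w i" "mat_act d X (w i)"] w norm_Xw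
      unfolding z_def orthonormal_family_def by simp
  qed (use K_nonneg s in auto)
  finally show ?thesis
    using trace w by (simp add: abs_X trace_spectral_mat)
qed

end

section \<open>The commutation index\<close>

lemma finite_subsets_q: "finite (subsets_q n q)"
  unfolding subsets_q_def by (rule finite_subset[of _ "Pow {0..<n}"]) auto

context
  fixes n q d :: nat and \<psi> :: "nat \<Rightarrow> complex mat"
  assumes majorana: "majorana n d \<psi>" and even_q: "even q"
begin

lemma psiI_subsets_q:
  assumes "I \<in> subsets_q n q"
  shows "psiI d \<psi> I \<in> carrier_mat d d" "mat_adjoint (psiI d \<psi> I) = psiI d \<psi> I"
  using assms even_q psiI_carrier[OF majorana] psiI_selfadjoint[OF majorana]
  unfolding subsets_q_def by (auto simp: atLeast0LessThan)

lemma comm_index_set_bdd_above: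
  "bdd_above {(1 / real (n choose q)) * (\<Sum>I\<in>subsets_q n q. Re ((mTr (psiI d \<psi> I * \<rho>))\<^sup>2)) | \<rho>. density d \<rho>}"
proof (rule bdd_aboveI, clarify)
  fix \<rho> assume \<rho>: "density d \<rho>"
  let ?N = "\<lambda>I. \<Sum>r<d. \<Sum>c<d. cmod (psiI d \<psi> I $$ (r, c))"
  have "Re ((mTr (psiI d \<psi> I * \<rho>))\<^sup>2) \<le> (?N I)\<^sup>2" if "I \<in> subsets_q n q" for I
    using complex_Re_le_cmod[of "(mTr (psiI d \<psi> I * \<rho>))\<^sup>2"]
      density_trace_bound[OF \<rho> psiI_subsets_q(1)[OF that]]
    by (simp add: norm_power) (meson order_trans norm_ge_zero power_mono)
  then show "(1 / real (n choose q)) * (\<Sum>I\<in>subsets_q n q. Re ((mTr (psiI d \<psi> I * \<rho>))\<^sup>2))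
      \<le> (1 / real (n choose q)) * (\<Sum>I\<in>subsets_q n q. (?N I)\<^sup>2)"
    by (intro mult_left_mono sum_mono) auto
qed

lemma pure_expectations_le_comm_index:
  assumes "cinner d y y = 1"
  shows "(1 / real (n choose q)) * (\<Sum>I\<in>subsets_q n q. (Re (cinner d (mat_act d (psiI d \<psi> I) y) y))\<^sup>2)
    \<le> comm_index n q d \<psi>"
proof -
  have trace: "Re ((mTr (psiI d \<psi> I * pure_state d y))\<^sup>2) = (Re (cinner d (mat_act d (psiI d \<psi> I) y) y))\<^sup>2"
    if "I \<in> subsets_q n q" for I
  proof -
    have "mTr (psiI d \<psi> I * pure_state d y) = of_real (Re (cinner d (mat_act d (psiI d \<psi> I) y) y))"
      using psiI_subsets_q[OF that] cinner_mat_act_selfadjoint_real trace_mult_pure_state by metis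
    then show ?thesis
      by (simp add: power2_eq_square)
  qed
  show ?thesis
    unfolding comm_index_def using density_pure_state[OF assms]
    by (intro cSup_upper[OF _ comm_index_set_bdd_above] CollectI exI[of _ "pure_state d y"])
      (simp add: trace cong: sum.cong)
qed

theorem majorana_trace_bound:
  assumes "0 < d" and X: "X \<in> carrier_mat d d"
  shows "(1 / real (n choose q)) * (\<Sum>I\<in>subsets_q n q. (cmod (ntr (psiI d \<psi> I * X)))\<^sup>2)
    \<le> 2 * comm_index n q d \<psi> * (Re (ntr (mat_abs X)))\<^sup>2"
proof (cases "n choose q = 0")
  case True
  have "0 \<le> comm_index n q d \<psi>"
    using pure_expectations_le_comm_index[OF cinner_delta_self[OF \<open>0 < d\<close>]] True by simp
  then show ?thesis
    by (simp add: True)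
next
  case False
  let ?C = "real (n choose q)"
  interpret bounded_pure_expectations d "subsets_q n q" "psiI d \<psi>" "?C * comm_index n q d \<psi>"
  proof
    fix y assume "cinner d y y = 1"
    with False show "(\<Sum>I\<in>subsets_q n q. (Re (cinner d (mat_act d (psiI d \<psi> I) y) y))\<^sup>2)
        \<le> ?C * comm_index n q d \<psi>"
      using pure_expectations_le_comm_index by (simp add: field_simps)
  qed (use \<open>0 < d\<close> finite_subsets_q psiI_subsets_q in auto)
  have ntr_psiI: "ntr (psiI d \<psi> I * X) = mTr (psiI d \<psi> I * X) / of_nat d" if "I \<in> subsets_q n q" for I
    using psiI_subsets_q(1)[OF that] unfolding ntr_def by simp
  have "(\<Sum>I\<in>subsets_q n q. (cmod (ntr (psiI d \<psi> I * X)))\<^sup>2)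
      = (\<Sum>I\<in>subsets_q n q. (cmod (mTr (psiI d \<psi> I * X)))\<^sup>2) / (real d)\<^sup>2"
    by (simp add: ntr_psiI norm_divide power_divide sum_divide_distrib cong: sum.cong)
  also have "\<dots> \<le> 2 * (?C * comm_index n q d \<psi>) * (Re (mTr (mat_abs X)))\<^sup>2 / (real d)\<^sup>2"
    using trace_bound[OF X] by (simp add: divide_right_mono)
  finally show ?thesis
    using False mat_abs_carrier[OF X] by (simp add: ntr_def field_simps power_divide)
qed

end

theorem mainTheorem5:
  fixes n q :: nat and \<psi> :: "nat \<Rightarrow> complex mat" and X :: "complex mat"
  assumes "even n" and "even q"
    and "majorana n (2 ^ (n div 2)) \<psi>"
    and "X \<in> carrier_mat (2 ^ (n div 2)) (2 ^ (n div 2))"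
  shows "(1 / real (n choose q)) * (\<Sum>I\<in>subsets_q n q. (cmod (ntr (psiI (2 ^ (n div 2)) \<psi> I * X)))\<^sup>2)
         \<le> 2 * comm_index n q (2 ^ (n div 2)) \<psi> * (Re (ntr (mat_abs X)))\<^sup>2"
  using majorana_trace_bound[OF assms(3,2) _ assms(4)] by simp

end
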